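(* Let $M,N\in\mathbb N$ with $M>N$, let $\mathcal B\subseteq\mathcal D^N$, and let $x\in R^{p,0}_\omega$. On $\{-1,1\}^{\mathcal B}$ with the uniform probability, define $W(\theta)=\langle\sum_{K\in\mathcal B}\theta_Kh^M_K,x\rangle$. Then $\mathbb E(W)=0$ and $\mathrm{Var}(W)\le\|x\|_p^2\,|\bigcup\mathcal B|^{1/q}\,2^{-N/q}$, where $|\bigcup\mathcal B|$ is the Lebesgue measure of the union of the intervals in $\mathcal B$.
   Context: Fix $1<p<\infty$, $q=p/(p-1)$, $p^*=\max\{p,q\}$. All $L_r$ spaces are over $[0,1]$ with Lebesgue measure and $\langle g,f\rangle=\int_0^1gf$. A dyadic interval is $[(i-1)2^{-n},i2^{-n})$, $n\ge0$, $1\le i\le2^n$; $\mathcal D^n$ is the set of those of length $2^{-n}$ and $\mathcal D_n=\bigcup_{k=0}^n\mathcal D^k$. For a dyadic interval $I$, $I^+,I^-$ are its left and right halves and $h_I=\chi_{I^+}-\chi_{I^-}$. For each $n\in\mathbb N$ a family $(h^n_I)_{I\in\mathcal D_{n-1}}$ in $L_p$ is fixed with the same joint distribution as $(h_I)_{I\in\mathcal D_{n-1}}$, such that the $\sigma$-algebras $\sigma(h^n_I:I\in\mathcal D_{n-1})$, $n\in\mathbb N$, are independent. Let $\mathcal D_\omega=\{(n,I):n\in\mathbb N,I\in\mathcal D_{n-1}\}$, linearly ordered by $(m,J)\prec(n,I)$ iff $m<n$, or $m=n$ and $J$ precedes $I$ in $\mathcal D_{m-1}$ (intervals ordered first by level,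 coarser first, then from left to right). $R^{p,0}_\omega$ is the closed linear span of $\{h^n_I:(n,I)\in\mathcal D_\omega\}$ in $L_p$ (a distributional copy of the mean-zero hyperplane of the Bourgain–Rosenthal–Schechtman space $R^p_\omega$); $(h^n_I)_{(n,I)\in\mathcal D_\omega}$, in the order $\prec$, is an unconditional basis of it. *)

theory Defs
  imports "HOL-Probability.Probability"
begin

definition U01 :: "real measure" where
  "U01 = restrict_space lborel {0..1}"

text \<open>Dyadic intervals are encoded as pairs (n,i) with 1 \<le> i \<le> 2^n, standing for
  [(i-1) 2^-n, i 2^-n).\<close>
definition dint :: "nat \<times> nat \<Rightarrow> real set" where
  "dint I = {real (snd I - 1) / 2 ^ fst I ..< real (snd I) / 2 ^ fst I}"

definition Dlev :: "nat \<Rightarrow> (nat \<times> nat) set" where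
  "Dlev n = {(n, i) | i. 1 \<le> i \<and> i \<le> 2 ^ n}"

definition Dupto :: "nat \<Rightarrow> (nat \<times> nat) set" where
  "Dupto n = {(k, i) | k i. k \<le> n \<and> 1 \<le> i \<and> i \<le> 2 ^ k}"

definition dleft :: "nat \<times> nat \<Rightarrow> nat \<times> nat" where
  "dleft I = (Suc (fst I), 2 * snd I - 1)"
definition dright :: "nat \<times> nat \<Rightarrow> nat \<times> nat" where
  "dright I = (Suc (fst I), 2 * snd I)"

definition haar :: "nat \<times> nat \<Rightarrow> real \<Rightarrow> real" where
  "haar I t = indicator (dint (dleft I)) t - indicator (dint (dright I)) t"

definition Domega :: "(nat \<times> (nat \<times> nat)) set" where
  "Domega = {(n, I). 1 \<le> n \<and> I \<in> Dupto (n - 1)}"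

text \<open>Standing assumptions on the family hh n I = h^n_I: for each n \<ge> 1 the vector
  (h^n_I)_{I \<in> D_{n-1}} has the same joint distribution as (h_I)_{I \<in> D_{n-1}}, and the
  generated sigma-algebras are independent.\<close>
definition haar_copies :: "(nat \<Rightarrow> nat \<times> nat \<Rightarrow> real \<Rightarrow> real) \<Rightarrow> bool" where
  "haar_copies hh \<longleftrightarrow>
     (\<forall>n\<ge>1. \<forall>I\<in>Dupto (n - 1). hh n I \<in> borel_measurable U01) \<and>
     (\<forall>n\<ge>1. distr U01 (PiM (Dupto (n - 1)) (\<lambda>_. borel)) (\<lambda>t. \<lambda>I\<in>Dupto (n - 1). hh n I t)
             = distr U01 (PiM (Dupto (n - 1)) (\<lambda>_. borel)) (\<lambda>t. \<lambda>I\<in>Dupto (n - 1). haar I t)) \<and>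
     prob_space.indep_vars U01 (\<lambda>n. PiM (Dupto (n - 1)) (\<lambda>_. borel))
        (\<lambda>n t. \<lambda>I\<in>Dupto (n - 1). hh n I t) {n. 1 \<le> n}"

definition lpnorm :: "real \<Rightarrow> (real \<Rightarrow> real) \<Rightarrow> real" where
  "lpnorm p f = (\<integral>t. \<bar>f t\<bar> powr p \<partial>U01) powr (1 / p)"

definition in_Lp :: "real \<Rightarrow> (real \<Rightarrow> real) \<Rightarrow> bool" where
  "in_Lp p f \<longleftrightarrow> f \<in> borel_measurable U01 \<and> integrable U01 (\<lambda>t. \<bar>f t\<bar> powr p)"

definition Rp0 :: "real \<Rightarrow> (nat \<Rightarrow> nat \<times> nat \<Rightarrow> real \<Rightarrow> real) \<Rightarrow> (real \<Rightarrow> real) set" where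
  "Rp0 p hh = {x. in_Lp p x \<and>
     (\<forall>e>0. \<exists>S c. finite S \<and> S \<subseteq> Domega \<and>
        lpnorm p (\<lambda>t. x t - (\<Sum>nI\<in>S. c nI * hh (fst nI) (snd nI) t)) < e)}"

definition signs :: "'a set \<Rightarrow> ('a \<Rightarrow> real) pmf" where
  "signs B = pmf_of_set (PiE B (\<lambda>_. {-1, 1}))"

end

theory Submission
  imports Defs
begin

text \<open>Put a_K = <h^M_K, x>. Under the uniform measure on signs, W = \<Sum>_K \<theta>_K a_K is a
  Rademacher sum, so E W = 0 and Var W = \<Sum>_K a_K^2 \<le> (max_K |a_K|) \<Sum>_K |a_K|.
  Since M > N, every K \<in> B lies in D_{M-1}, so (h^M_K)_K has the joint distribution of the Haar
  functions (h_K)_K. Hence the L_q norms of |h^M_K| and of \<Sum>_{K\<in>B} |h^M_K| can be computed for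
  the Haar functions, where |h_K| \<le> 1_K and, the intervals of one level being disjoint,
  \<Sum>_{K\<in>B} |h_K| \<le> 1_{\<Union>B}. Hoelder's inequality then gives |a_K| \<le> 2^{-N/q} \<parallel>x\<parallel>_p and
  \<Sum>_K |a_K| \<le> |\<Union>B|^{1/q} \<parallel>x\<parallel>_p.\<close>

lemma integrable_mult_of_powr:
  fixes f g :: "'a \<Rightarrow> real"
  assumes pq: "p > 1" "q > 1" "1/p + 1/q = 1"
    and f: "f \<in> borel_measurable M" "\<And>x. 0 \<le> f x" "integrable M (\<lambda>x. f x powr p)"
    and g: "g \<in> borel_measurable M" "\<And>x. 0 \<le> g x" "integrable M (\<lambda>x. g x powr q)"
  shows "integrable M (\<lambda>x. f x * g x)"
proof (rule Bochner_Integration.integrable_bound)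
  show "integrable M (\<lambda>x. f x powr p / p + g x powr q / q)"
    using f g by auto
  show "AE x in M. norm (f x * g x) \<le> norm (f x powr p / p + g x powr q / q)"
    using Youngs_inequality[OF pq] f g pq by (auto intro!: AE_I2 simp: abs_of_nonneg)
qed (use f g in simp)

lemma Holder_inequality_nonneg:
  fixes f g :: "'a \<Rightarrow> real"
  assumes pq: "p > 1" "q > 1" "1/p + 1/q = 1"
    and f: "f \<in> borel_measurable M" "\<And>x. 0 \<le> f x" "integrable M (\<lambda>x. f x powr p)"
    and g: "g \<in> borel_measurable M" "\<And>x. 0 \<le> g x" "integrable M (\<lambda>x. g x powr q)"
  shows "(\<integral>x. f x * g x \<partial>M) \<le> (\<integral>x. f x powr p \<partial>M) powr (1/p) * (\<integral>x. g x powr q \<partial>M) powr (1/q)"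
proof -
  define A where "A = (\<integral>x. f x powr p \<partial>M)"
  define B where "B = (\<integral>x. g x powr q \<partial>M)"
  have fg: "integrable M (\<lambda>x. f x * g x)"
    using integrable_mult_of_powr[OF pq f g] .
  show ?thesis
  proof (cases "A > 0 \<and> B > 0")
    case True
    define a where "a = A powr (1/p)"
    define b where "b = B powr (1/q)"
    have a: "a > 0" "a powr p = A" and b: "b > 0" "b powr q = B"
      using True pq by (auto simp: a_def b_def powr_powr)
    have young: "f x * g x / (a * b) \<le> f x powr p / (A * p) + g x powr q / (B * q)" for x
    proof -
      have "f x * g x / (a * b) = (f x / a) * (g x / b)" by simp
      also have "\<dots> \<le> (f x / a) powr p / p + (g x / b) powr q / q"
        using Youngs_inequality[OF pq, of "f x / a" "g x / b"] f(2) g(2) a b by simp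
      also have "\<dots> = f x powr p / (A * p) + g x powr q / (B * q)"
        using f(2) g(2) a b by (simp add: powr_divide)
      finally show ?thesis .
    qed
    have "(\<integral>x. f x * g x \<partial>M) / (a * b) = (\<integral>x. f x * g x / (a * b) \<partial>M)"
      by simp
    also have "\<dots> \<le> (\<integral>x. f x powr p / (A * p) + g x powr q / (B * q) \<partial>M)"
      using fg f g young by (intro integral_mono) auto
    also have "\<dots> = 1"
      using f g True pq by (simp add: A_def B_def)
    finally show ?thesis
      using a b by (simp add: a_def b_def A_def B_def divide_le_eq)
  next
    case False
    then have "A = 0 \<or> B = 0"
      by (auto simp: A_def B_def integral_nonneg less_le)
    then have "(AE x in M. f x powr p = 0) \<or> (AE x in M. g x powr q = 0)"
      using integral_nonneg_eq_0_iff_AE[OF f(3)] integral_nonneg_eq_0_iff_AE[OF g(3)]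
      by (auto simp: A_def B_def)
    then have "AE x in M. f x * g x = 0"
      by (auto elim: AE_mp)
    then show ?thesis
      by (simp add: integral_eq_zero_AE)
  qed
qed

lemma sum_signs_flip:
  assumes "K \<in> B"
  shows "(\<Sum>\<theta>\<in>PiE B (\<lambda>_. {-1::real, 1}). f \<theta>)
       = (\<Sum>\<theta>\<in>PiE B (\<lambda>_. {-1::real, 1}). f (\<theta>(K := - \<theta> K)))"
  by (rule sum.reindex_bij_witness[of _ "\<lambda>\<theta>. \<theta>(K := - \<theta> K)" "\<lambda>\<theta>. \<theta>(K := - \<theta> K)"])
     (use assms in \<open>auto simp: PiE_iff extensional_def\<close>)

lemma sum_signs_coord:
  assumes "K \<in> B"
  shows "(\<Sum>\<theta>\<in>PiE B (\<lambda>_. {-1::real, 1}). \<theta> K) = 0"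
  using sum_signs_flip[OF assms, of "\<lambda>\<theta>. \<theta> K"] by (simp add: sum_negf)

lemma sum_signs_mult:
  assumes "K \<in> B" "L \<in> B"
  shows "(\<Sum>\<theta>\<in>PiE B (\<lambda>_. {-1::real, 1}). \<theta> K * \<theta> L)
       = (if K = L then real (card (PiE B (\<lambda>_. {-1::real, 1}))) else 0)"
proof (cases "K = L")
  case True
  have "(\<Sum>\<theta>\<in>PiE B (\<lambda>_. {-1::real, 1}). \<theta> K * \<theta> K) = (\<Sum>\<theta>\<in>PiE B (\<lambda>_. {-1::real, 1}). 1)"
    using assms by (intro sum.cong) (auto simp: PiE_iff)
  then show ?thesis using True by simp
next
  case False
  then show ?thesis
    using sum_signs_flip[OF assms(1), of "\<lambda>\<theta>. \<theta> K * \<theta> L"] by (simp add: sum_negf)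
qed

lemma expectation_signs:
  assumes "finite B"
  shows "measure_pmf.expectation (signs B) f
       = (\<Sum>\<theta>\<in>PiE B (\<lambda>_. {-1::real, 1}). f \<theta>) / card (PiE B (\<lambda>_. {-1::real, 1}))"
  using assms by (simp add: signs_def integral_pmf_of_set finite_PiE PiE_eq_empty_iff)

lemma expectation_signs_linear:
  fixes a :: "'a \<Rightarrow> real"
  assumes "finite B"
  shows "measure_pmf.expectation (signs B) (\<lambda>\<theta>. \<Sum>K\<in>B. \<theta> K * a K) = 0"
proof -
  have "(\<Sum>\<theta>\<in>PiE B (\<lambda>_. {-1::real, 1}). \<Sum>K\<in>B. \<theta> K * a K)
      = (\<Sum>K\<in>B. a K * (\<Sum>\<theta>\<in>PiE B (\<lambda>_. {-1::real, 1}). \<theta> K))"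
    by (subst sum.swap) (simp add: sum_distrib_left mult.commute)
  also have "\<dots> = 0"
    by (simp add: sum_signs_coord)
  finally show ?thesis
    using assms by (simp add: expectation_signs)
qed

lemma variance_signs_linear:
  fixes a :: "'a \<Rightarrow> real"
  assumes "finite B"
  shows "measure_pmf.variance (signs B) (\<lambda>\<theta>. \<Sum>K\<in>B. \<theta> K * a K) = (\<Sum>K\<in>B. (a K)\<^sup>2)"
proof -
  define S where "S = PiE B (\<lambda>_. {-1::real, 1})"
  have "card S > 0"
    using assms by (simp add: S_def card_gt_0_iff finite_PiE PiE_eq_empty_iff)
  have "(\<Sum>\<theta>\<in>S. (\<Sum>K\<in>B. \<theta> K * a K)\<^sup>2) = (\<Sum>K\<in>B. \<Sum>L\<in>B. a K * a L * (\<Sum>\<theta>\<in>S. \<theta> K * \<theta> L))"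
    by (simp add: power2_eq_square sum_product sum_distrib_left sum.swap[of _ S] algebra_simps)
  also have "\<dots> = (\<Sum>K\<in>B. (a K)\<^sup>2) * card S"
    using assms by (simp add: S_def sum_signs_mult if_distrib[of "\<lambda>c. _ * c"]
                              power2_eq_square sum_distrib_right cong: sum.cong if_cong)
  finally show ?thesis
    using assms \<open>card S > 0\<close>
    by (simp add: expectation_signs_linear expectation_signs S_def[symmetric])
qed

lemma sum_squares_le_bound_times_sum:
  fixes a c :: "'a \<Rightarrow> real"
  assumes "\<And>K. K \<in> B \<Longrightarrow> \<bar>a K\<bar> \<le> c K" and "\<And>K. K \<in> B \<Longrightarrow> c K \<le> D"
  shows "(\<Sum>K\<in>B. (a K)\<^sup>2) \<le> D * (\<Sum>K\<in>B. c K)"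
proof -
  have "(a K)\<^sup>2 \<le> c K * D" if "K \<in> B" for K
  proof -
    have "(a K)\<^sup>2 = \<bar>a K\<bar> * \<bar>a K\<bar>"
      by (simp add: power2_eq_square)
    also have "\<dots> \<le> c K * D"
      using assms[OF that] by (intro mult_mono) auto
    finally show ?thesis .
  qed
  then show ?thesis
    by (simp add: sum_distrib_left mult.commute sum_mono)
qed

lemma Dlev_finite: "finite (Dlev n)"
proof -
  have "Dlev n = (\<lambda>i. (n, i)) ` {1..2^n}"
    by (auto simp: Dlev_def)
  then show ?thesis by simp
qed

lemma Dlev_subset_Dupto: "n \<le> m \<Longrightarrow> Dlev n \<subseteq> Dupto m"
  by (auto simp: Dlev_def Dupto_def)

lemma dint_borel [measurable]: "dint I \<in> sets borel"
  by (simp add: dint_def)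

lemma emeasure_dint_finite: "emeasure lborel (dint I) < \<infinity>"
proof -
  have "emeasure lborel (dint I) \<le> emeasure lborel {real (snd I - 1) / 2 ^ fst I .. real (snd I) / 2 ^ fst I}"
    by (rule emeasure_mono) (auto simp: dint_def)
  also have "\<dots> < \<infinity>"
    by (simp add: emeasure_lborel_Icc_eq)
  finally show ?thesis .
qed

lemma measure_dint_Dlev:
  assumes "I \<in> Dlev n"
  shows "measure lborel (dint I) = 2 powr (- real n)"
proof -
  obtain i where I: "I = (n, i)" "1 \<le> i"
    using assms by (auto simp: Dlev_def)
  then have "real (i - 1) = real i - 1"
    by simp
  then have "measure lborel (dint I) = 1 / 2 ^ n"
    using I by (simp add: dint_def diff_divide_distrib divide_right_mono)
  then show ?thesis
    by (simp add: powr_minus powr_realpow divide_inverse)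
qed

lemma dint_dleft_subset: "dint (dleft I) \<subseteq> dint I"
  by (cases "snd I") (auto simp: dint_def dleft_def field_simps)

lemma dint_dright_subset: "dint (dright I) \<subseteq> dint I"
  by (cases "snd I") (auto simp: dint_def dright_def field_simps)

lemma abs_haar_le_indicator: "\<bar>haar I t\<bar> \<le> indicator (dint I) t"
  using dint_dleft_subset[of I] dint_dright_subset[of I]
  by (auto simp: haar_def indicator_def)

lemma disjoint_family_on_dint_Dlev: "disjoint_family_on dint (Dlev n)"
unfolding disjoint_family_on_def
proof (intro ballI impI)
  fix I J assume "I \<in> Dlev n" "J \<in> Dlev n" "I \<noteq> J"
  then obtain i j where IJ: "I = (n, i)" "J = (n, j)" "1 \<le> i" "1 \<le> j" "i \<noteq> j"
    by (auto simp: Dlev_def)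
  then have "real i \<le> real j - 1 \<or> real j \<le> real i - 1"
    by linarith
  then show "dint I \<inter> dint J = {}"
    using IJ by (auto simp: dint_def of_nat_diff divide_less_cancel)
qed

lemma sum_abs_haar_le_indicator:
  assumes "B \<subseteq> Dlev n"
  shows "(\<Sum>K\<in>B. \<bar>haar K t\<bar>) \<le> indicator (\<Union>K\<in>B. dint K) t"
proof -
  have fin: "finite B"
    using assms Dlev_finite finite_subset by blast
  have "(\<Sum>K\<in>B. \<bar>haar K t\<bar>) \<le> (\<Sum>K\<in>B. indicator (dint K) t)"
    by (intro sum_mono abs_haar_le_indicator)
  also have "\<dots> = indicator (\<Union>K\<in>B. dint K) t"
    using fin disjoint_family_on_mono[OF assms disjoint_family_on_dint_Dlev]
    by (simp add: indicator_UN_disjoint)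
  finally show ?thesis .
qed

lemma finite_measure_U01: "finite_measure U01"
proof (rule finite_measureI)
  have "emeasure U01 {0..1} = emeasure lborel {0..(1::real)}"
    unfolding U01_def by (subst emeasure_restrict_space) auto
  then show "emeasure U01 (space U01) \<noteq> \<infinity>"
    by (simp add: U01_def)
qed

lemma haar_borel_measurable_U01 [measurable]: "haar I \<in> borel_measurable U01"
  unfolding haar_def U01_def by (intro measurable_restrict_space1) measurable

lemma integral_U01_le_measure:
  fixes f :: "real \<Rightarrow> real"
  assumes f: "f \<in> borel_measurable U01" "\<And>t. 0 \<le> f t" "\<And>t. f t \<le> indicator S t"
    and S: "S \<in> sets borel" "emeasure lborel S < \<infinity>"
  shows "integrable U01 f" and "(\<integral>t. f t \<partial>U01) \<le> measure lborel S"
proof -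
  have f_le_1: "\<And>t. f t \<le> 1"
    using f(3) order_trans indicator_le_1 by blast
  show f_int: "integrable U01 f"
    using f f_le_1 by (intro finite_measure.integrable_const_bound[OF finite_measure_U01, where B=1]) auto
  have ind_int: "integrable U01 (indicator S :: real \<Rightarrow> real)"
    using S by (intro finite_measure.integrable_const_bound[OF finite_measure_U01, where B=1])
               (auto simp: U01_def intro!: measurable_restrict_space1)
  have "(\<integral>t. f t \<partial>U01) \<le> (\<integral>t. indicator S t \<partial>U01)"
    using f_int ind_int f(3) by (rule integral_mono)
  also have "\<dots> = measure lborel (S \<inter> {0..1})"
    using S by (simp add: U01_def measure_restrict_space)
  also have "\<dots> \<le> measure lborel S"
    using S by (intro measure_mono_fmeasurable) (auto intro: fmeasurableI)
  finally show "(\<integral>t. f t \<partial>U01) \<le> measure lborel S" .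
qed

lemma
  fixes G :: "'b \<Rightarrow> 'c::{banach, second_countable_topology}"
  assumes f: "f \<in> measurable M N" and g: "g \<in> measurable M N"
    and distr: "distr M N f = distr M N g" and G: "G \<in> borel_measurable N"
  shows integrable_comp_eq_if_distr_eq: "integrable M (\<lambda>t. G (f t)) \<longleftrightarrow> integrable M (\<lambda>t. G (g t))"
    and integral_comp_eq_if_distr_eq: "(\<integral>t. G (f t) \<partial>M) = (\<integral>t. G (g t) \<partial>M)"
  using integrable_distr_eq[OF f G] integrable_distr_eq[OF g G]
    integral_distr[OF f G] integral_distr[OF g G] distr by simp_all

lemma haar_copies_borel_measurable:
  "haar_copies hh \<Longrightarrow> 1 \<le> n \<Longrightarrow> I \<in> Dupto (n - 1) \<Longrightarrow> hh n I \<in> borel_measurable U01"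
  by (simp add: haar_copies_def)

lemma haar_copies_powr_integral_le:
  assumes hh: "haar_copies hh" "1 \<le> n" and q: "q > 0"
    and F: "F \<in> borel_measurable (PiM (Dupto (n - 1)) (\<lambda>_. borel))" "\<And>v. 0 \<le> F v"
    and F_haar: "\<And>t. F (\<lambda>I\<in>Dupto (n - 1). haar I t) \<le> indicator S t"
    and S: "S \<in> sets borel" "emeasure lborel S < \<infinity>"
  shows "integrable U01 (\<lambda>t. F (\<lambda>I\<in>Dupto (n - 1). hh n I t) powr q)"
    and "(\<integral>t. F (\<lambda>I\<in>Dupto (n - 1). hh n I t) powr q \<partial>U01) \<le> measure lborel S"
proof -
  let ?P = "PiM (Dupto (n - 1)) (\<lambda>_. borel) :: (nat \<times> nat \<Rightarrow> real) measure"
  have hh_vec: "(\<lambda>t. \<lambda>I\<in>Dupto (n - 1). hh n I t) \<in> measurable U01 ?P"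
    using hh by (intro measurable_restrict) (simp add: haar_copies_borel_measurable)
  have haar_vec: "(\<lambda>t. \<lambda>I\<in>Dupto (n - 1). haar I t) \<in> measurable U01 ?P"
    by (intro measurable_restrict) simp
  have distr: "distr U01 ?P (\<lambda>t. \<lambda>I\<in>Dupto (n - 1). hh n I t) = distr U01 ?P (\<lambda>t. \<lambda>I\<in>Dupto (n - 1). haar I t)"
    using hh by (simp add: haar_copies_def)
  have G: "(\<lambda>v. F v powr q) \<in> borel_measurable ?P"
    using F by measurable
  have bound: "F (\<lambda>I\<in>Dupto (n - 1). haar I t) powr q \<le> indicator S t" for t
  proof (cases "t \<in> S")
    case True
    then show ?thesis
      using F_haar[of t] F(2) q powr_mono2[of q _ 1] by simp
  next
    case False
    then show ?thesis
      using F_haar[of t] F(2)[of "\<lambda>I\<in>Dupto (n - 1). haar I t"] by simp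
  qed
  have "integrable U01 (\<lambda>t. F (\<lambda>I\<in>Dupto (n - 1). haar I t) powr q)"
    and "(\<integral>t. F (\<lambda>I\<in>Dupto (n - 1). haar I t) powr q \<partial>U01) \<le> measure lborel S"
    using measurable_comp[OF haar_vec G] bound S by (auto intro!: integral_U01_le_measure simp: comp_def)
  then show "integrable U01 (\<lambda>t. F (\<lambda>I\<in>Dupto (n - 1). hh n I t) powr q)"
    and "(\<integral>t. F (\<lambda>I\<in>Dupto (n - 1). hh n I t) powr q \<partial>U01) \<le> measure lborel S"
    using integrable_comp_eq_if_distr_eq[OF hh_vec haar_vec distr G]
      integral_comp_eq_if_distr_eq[OF hh_vec haar_vec distr G] by simp_all
qed

lemma conjugate_exponent:
  fixes p q :: real
  assumes "1 < p" "q = p / (p - 1)"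
  shows "1 < q" "1/q + 1/p = 1"
proof -
  have "q = 1 + 1 / (p - 1)"
    using assms by (simp add: field_simps)
  then show "1 < q"
    using assms by simp
  have "1/q = (p - 1) / p"
    using assms by simp
  then show "1/q + 1/p = 1"
    using assms by (simp add: diff_divide_distrib)
qed

lemma integral_mult_abs_le_lpnorm:
  assumes p: "1 < p" "q = p / (p - 1)" and x: "in_Lp p x"
    and F: "F \<in> borel_measurable U01" "\<And>t. 0 \<le> F t" "integrable U01 (\<lambda>t. F t powr q)"
    and m: "(\<integral>t. F t powr q \<partial>U01) \<le> m"
  shows "integrable U01 (\<lambda>t. F t * \<bar>x t\<bar>)"
    and "(\<integral>t. F t * \<bar>x t\<bar> \<partial>U01) \<le> m powr (1/q) * lpnorm p x"
proof -
  note q = conjugate_exponent[OF p]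
  have x': "(\<lambda>t. \<bar>x t\<bar>) \<in> borel_measurable U01" "integrable U01 (\<lambda>t. \<bar>x t\<bar> powr p)"
    using x by (auto simp: in_Lp_def)
  show "integrable U01 (\<lambda>t. F t * \<bar>x t\<bar>)"
    using integrable_mult_of_powr[OF q(1) p(1) q(2) F] x' by simp
  have "(\<integral>t. F t * \<bar>x t\<bar> \<partial>U01) \<le> (\<integral>t. F t powr q \<partial>U01) powr (1/q) * lpnorm p x"
    using Holder_inequality_nonneg[OF q(1) p(1) q(2) F] x' by (simp add: lpnorm_def)
  also have "\<dots> \<le> m powr (1/q) * lpnorm p x"
    using m q F(2) by (intro mult_right_mono powr_mono2) (auto simp: lpnorm_def integral_nonneg)
  finally show "(\<integral>t. F t * \<bar>x t\<bar> \<partial>U01) \<le> m powr (1/q) * lpnorm p x" .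
qed

lemma haar_copies_integral_mult_abs_le:
  assumes hh: "haar_copies hh" "1 \<le> n" and p: "1 < p" "q = p / (p - 1)" and x: "in_Lp p x"
    and F: "F \<in> borel_measurable (PiM (Dupto (n - 1)) (\<lambda>_. borel))" "\<And>v. 0 \<le> F v"
    and F_haar: "\<And>t. F (\<lambda>I\<in>Dupto (n - 1). haar I t) \<le> indicator S t"
    and S: "S \<in> sets borel" "emeasure lborel S < \<infinity>"
  shows "integrable U01 (\<lambda>t. F (\<lambda>I\<in>Dupto (n - 1). hh n I t) * \<bar>x t\<bar>)"
    and "(\<integral>t. F (\<lambda>I\<in>Dupto (n - 1). hh n I t) * \<bar>x t\<bar> \<partial>U01) \<le> measure lborel S powr (1/q) * lpnorm p x"
proof -
  let ?F = "\<lambda>t. F (\<lambda>I\<in>Dupto (n - 1). hh n I t)"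
  have q: "0 < q"
    using conjugate_exponent(1)[OF p] by simp
  have "?F \<in> borel_measurable U01"
    using hh F(1) by (intro measurable_comp[OF measurable_restrict F(1), unfolded comp_def])
                     (simp add: haar_copies_borel_measurable)
  with haar_copies_powr_integral_le[OF hh q F F_haar S]
  show "integrable U01 (\<lambda>t. ?F t * \<bar>x t\<bar>)"
    and "(\<integral>t. ?F t * \<bar>x t\<bar> \<partial>U01) \<le> measure lborel S powr (1/q) * lpnorm p x"
    using integral_mult_abs_le_lpnorm[OF p x] F(2) by blast+
qed

lemma haar_copy_integral_mult_abs_le:
  assumes hh: "haar_copies hh" "1 \<le> n" and p: "1 < p" "q = p / (p - 1)" and x: "in_Lp p x"
    and K: "K \<in> Dupto (n - 1)"
  shows "integrable U01 (\<lambda>t. \<bar>hh n K t\<bar> * \<bar>x t\<bar>)"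
    and "(\<integral>t. \<bar>hh n K t\<bar> * \<bar>x t\<bar> \<partial>U01) \<le> measure lborel (dint K) powr (1/q) * lpnorm p x"
  using haar_copies_integral_mult_abs_le[OF hh p x, of "\<lambda>v. \<bar>v K\<bar>" "dint K"]
    abs_haar_le_indicator[of K] emeasure_dint_finite[of K] K by simp_all

lemma haar_copies_sum_integral_mult_abs_le:
  assumes hh: "haar_copies hh" "1 \<le> n" and p: "1 < p" "q = p / (p - 1)" and x: "in_Lp p x"
    and B: "B \<subseteq> Dlev N" "B \<subseteq> Dupto (n - 1)"
  shows "integrable U01 (\<lambda>t. (\<Sum>K\<in>B. \<bar>hh n K t\<bar>) * \<bar>x t\<bar>)"
    and "(\<integral>t. (\<Sum>K\<in>B. \<bar>hh n K t\<bar>) * \<bar>x t\<bar> \<partial>U01)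
           \<le> measure lborel (\<Union>K\<in>B. dint K) powr (1/q) * lpnorm p x"
proof -
  have fin: "finite B"
    using B(1) Dlev_finite finite_subset by blast
  have "emeasure lborel (\<Union>K\<in>B. dint K) \<le> (\<Sum>K\<in>B. emeasure lborel (dint K))"
    using fin by (intro emeasure_subadditive_finite) auto
  also have "\<dots> < \<infinity>"
    using fin emeasure_dint_finite by (simp add: sum_Pinfty less_top)
  finally have "emeasure lborel (\<Union>K\<in>B. dint K) < \<infinity>" .
  moreover have "(\<lambda>v :: nat \<times> nat \<Rightarrow> real. \<Sum>K\<in>B. \<bar>v K\<bar>) \<in> borel_measurable (PiM (Dupto (n - 1)) (\<lambda>_. borel))"
    using B(2) by (intro borel_measurable_sum borel_measurable_abs measurable_component_singleton) blast
  moreover have "(\<Sum>K\<in>B. \<bar>(\<lambda>I\<in>Dupto (n - 1). f I) K\<bar>) = (\<Sum>K\<in>B. \<bar>f K\<bar>)" for f :: "nat \<times> nat \<Rightarrow> real"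
    using B(2) by (intro sum.cong) auto
  ultimately show "integrable U01 (\<lambda>t. (\<Sum>K\<in>B. \<bar>hh n K t\<bar>) * \<bar>x t\<bar>)"
    and "(\<integral>t. (\<Sum>K\<in>B. \<bar>hh n K t\<bar>) * \<bar>x t\<bar> \<partial>U01)
           \<le> measure lborel (\<Union>K\<in>B. dint K) powr (1/q) * lpnorm p x"
    using haar_copies_integral_mult_abs_le[OF hh p x, of "\<lambda>v. \<Sum>K\<in>B. \<bar>v K\<bar>" "\<Union>K\<in>B. dint K"]
      sum_abs_haar_le_indicator[OF B(1)] fin by (simp_all add: sum_nonneg)
qed

lemma integrable_haar_copy_mult:
  assumes hh: "haar_copies hh" "1 \<le> n" and p: "1 < p" and x: "in_Lp p x"
    and K: "K \<in> Dupto (n - 1)"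
  shows "integrable U01 (\<lambda>t. hh n K t * x t)"
  using haar_copy_integral_mult_abs_le(1)[OF hh p refl x K] haar_copies_borel_measurable[OF hh K] x
  by (subst integrable_abs_iff[symmetric]) (auto simp: abs_mult in_Lp_def)

lemma sum_squares_inner_haar_copies_le:
  assumes hh: "haar_copies hh" "1 \<le> n" and p: "1 < p" "q = p / (p - 1)" and x: "in_Lp p x"
    and B: "B \<subseteq> Dlev N" "B \<subseteq> Dupto (n - 1)"
  shows "(\<Sum>K\<in>B. (\<integral>t. hh n K t * x t \<partial>U01)\<^sup>2)
           \<le> (lpnorm p x)\<^sup>2 * measure lborel (\<Union>K\<in>B. dint K) powr (1/q) * 2 powr (- real N / q)"
proof -
  define c where "c K = (\<integral>t. \<bar>hh n K t\<bar> * \<bar>x t\<bar> \<partial>U01)" for K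
  define D where "D = 2 powr (- real N / q) * lpnorm p x"
  note c_bound = haar_copy_integral_mult_abs_le[OF hh p x]
  have KD: "K \<in> Dupto (n - 1)" if "K \<in> B" for K
    using that B(2) by blast
  have "\<bar>\<integral>t. hh n K t * x t \<partial>U01\<bar> \<le> c K" if "K \<in> B" for K
    unfolding c_def using integrable_haar_copy_mult[OF hh p(1) x KD[OF that]] c_bound(1)[OF KD[OF that]]
    by (intro integral_abs_bound_integral) (auto simp: abs_mult)
  moreover have "c K \<le> D" if "K \<in> B" for K
    using c_bound(2)[OF KD[OF that]] measure_dint_Dlev[of K N] that B(1)
    by (auto simp: c_def D_def powr_powr)
  ultimately have "(\<Sum>K\<in>B. (\<integral>t. hh n K t * x t \<partial>U01)\<^sup>2) \<le> D * (\<Sum>K\<in>B. c K)"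
    by (rule sum_squares_le_bound_times_sum)
  also have "(\<Sum>K\<in>B. c K) = (\<integral>t. (\<Sum>K\<in>B. \<bar>hh n K t\<bar>) * \<bar>x t\<bar> \<partial>U01)"
    unfolding c_def sum_distrib_right using c_bound(1) B(2)
    by (intro Bochner_Integration.integral_sum[symmetric]) auto
  also have "D * \<dots> \<le> D * (measure lborel (\<Union>K\<in>B. dint K) powr (1/q) * lpnorm p x)"
    using haar_copies_sum_integral_mult_abs_le(2)[OF hh p x B]
    by (intro mult_left_mono) (simp_all add: D_def lpnorm_def)
  finally show ?thesis
    by (simp add: D_def power2_eq_square mult_ac)
qed

theorem mainTheorem6:
  fixes p q :: real and hh :: "nat \<Rightarrow> nat \<times> nat \<Rightarrow> real \<Rightarrow> real"
    and M N :: nat and B :: "(nat \<times> nat) set" and x :: "real \<Rightarrow> real"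
    and W :: "((nat \<times> nat) \<Rightarrow> real) \<Rightarrow> real"
  assumes p: "1 < p" and q: "q = p / (p - 1)"
    and hh: "haar_copies hh"
    and MN: "M > N"
    and B: "B \<subseteq> Dlev N"
    and x: "x \<in> Rp0 p hh"
    and W: "W = (\<lambda>\<theta>. \<integral>t. (\<Sum>K\<in>B. \<theta> K * hh M K t) * x t \<partial>U01)"
  shows "measure_pmf.expectation (signs B) W = 0 \<and>
         measure_pmf.variance (signs B) W
           \<le> (lpnorm p x)\<^sup>2 * (measure lborel (\<Union>K\<in>B. dint K)) powr (1 / q) * 2 powr (- real N / q)"
proof -
  have M: "1 \<le> M" and "N \<le> M - 1"
    using MN by simp_all
  then have BD: "B \<subseteq> Dupto (M - 1)"
    using B Dlev_subset_Dupto by blast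
  have finB: "finite B"
    using B Dlev_finite finite_subset by blast
  have xL: "in_Lp p x"
    using x by (simp add: Rp0_def)
  define a where "a K = (\<integral>t. hh M K t * x t \<partial>U01)" for K
  have integrable: "integrable U01 (\<lambda>t. hh M K t * x t)" if "K \<in> B" for K
    using integrable_haar_copy_mult[OF hh M p xL] that BD by blast
  have "W = (\<lambda>\<theta>. \<Sum>K\<in>B. \<theta> K * a K)"
    unfolding W a_def sum_distrib_right mult.assoc
    by (subst Bochner_Integration.integral_sum) (use integrable in auto)
  then show ?thesis
    using expectation_signs_linear[OF finB, of a] variance_signs_linear[OF finB, of a]
      sum_squares_inner_haar_copies_le[OF hh M p q xL B BD] by (simp add: a_def)
qed

end
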